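(* Let $n\ge 3$, $\delta>0$, and let $F\subset C^2([0,1]^{n-1})$ be a cinematic family (with cinematic constant $K$, doubling constant $D$ and modulus of continuity $\alpha$). Then for any $f,g\in F$ with $\|f-g\|_{C^2([0,1]^{n-1})}\in[\delta,1]$, $$\mathcal{L}^n(f^\delta\cap g^\delta)\lesssim\frac{\delta^2}{\|f-g\|_{C^2([0,1]^{n-1})}},$$ where the implicit constant depends only on $n$ and the parameters $K,D,\alpha$ of $F$.
   Context: $\mathcal{L}^n$ is Lebesgue measure on $\mathbb{R}^n$. For $f\in C^2([0,1]^{n-1})$ and $\delta>0$, the vertical $\delta$-neighborhood is $f^\delta:=\{(x,y)\in[0,1]^{n-1}\times\mathbb{R}: f(x)-\delta\le y\le f(x)+\delta\}$. Cinematic family: for a domain $U\subset\mathbb{R}^k$, $F\subset C^2(U)$ (metric from the usual $C^2(U)$ norm) is a cinematic family with cinematic constant $K$, doubling constant $D$ and modulus of continuity $\alpha$ if: (1) $F$ lies in a ball of diameter $K$ in $C^2(U)$; (2) $F$ is doubling with constant at most $D$; (3) for all $f,g\in F$ and $\xi\in S^{k-1}$, $\inf_{x\in U}\{|f-g|(x)+|\nabla f-\nabla g|(x)+|\nabla_\xi\nabla_\xi(f-g)(x)|\}\ge K^{-1}\|f-g\|_{C^2(U)}$, where $\nabla_\xi\nabla_\xi h=\langle\nabla^2h\,\xi,\xi\rangle$; (4) there is an increasing continuous $\alpha:[0,1]\to[0,\infty)$, $\alpha(0)=0$, $0<\alpha(s)\le K^{-1}s$ for $s\in(0,1]$, such that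 for all $f,g\in F$, $\xi\in S^{k-1}$, sufficiently small $\eta>0$ and $x,y\in U$ with $|x-y|\le\alpha(\eta)$: $|\nabla_\xi\nabla_\xi(f-g)(x)-\nabla_\xi\nabla_\xi(f-g)(y)|\le\eta$. *)

theory Defs
  imports "HOL-Analysis.Analysis"
begin

text \<open>The closed unit cube [0,1]^(n-1), realised in a Euclidean space 'a of dimension n-1.\<close>
definition unit_cube :: "'a::euclidean_space set" where
  "unit_cube = cbox 0 One"

definition grad_on :: "'a::euclidean_space set \<Rightarrow> ('a \<Rightarrow> real) \<Rightarrow> 'a \<Rightarrow> 'a" where
  "grad_on U h x = (SOME v. (h has_derivative (\<lambda>u. v \<bullet> u)) (at x within U))"

definition hess_on :: "'a::euclidean_space set \<Rightarrow> ('a \<Rightarrow> real) \<Rightarrow> 'a \<Rightarrow> 'a \<Rightarrow> 'a" where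
  "hess_on U h x = (SOME L. (grad_on U h has_derivative L) (at x within U))"

definition C2_on :: "'a::euclidean_space set \<Rightarrow> ('a \<Rightarrow> real) \<Rightarrow> bool" where
  "C2_on U h \<longleftrightarrow>
     (\<forall>x\<in>U. (h has_derivative (\<lambda>u. grad_on U h x \<bullet> u)) (at x within U)) \<and>
     (\<forall>x\<in>U. (grad_on U h has_derivative hess_on U h x) (at x within U)) \<and>
     (\<forall>i\<in>Basis. continuous_on U (\<lambda>x. hess_on U h x i))"

definition C2_norm :: "'a::euclidean_space set \<Rightarrow> ('a \<Rightarrow> real) \<Rightarrow> real" where
  "C2_norm U h = (SUP x\<in>U. \<bar>h x\<bar>) + (SUP x\<in>U. norm (grad_on U h x)) + (SUP x\<in>U. onorm (hess_on U h x))"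

definition C2_dist :: "'a::euclidean_space set \<Rightarrow> ('a \<Rightarrow> real) \<Rightarrow> ('a \<Rightarrow> real) \<Rightarrow> real" where
  "C2_dist U f g = C2_norm U (\<lambda>x. f x - g x)"

definition dd2 :: "'a::euclidean_space set \<Rightarrow> ('a \<Rightarrow> real) \<Rightarrow> 'a \<Rightarrow> 'a \<Rightarrow> real" where
  "dd2 U h \<xi> x = hess_on U h x \<xi> \<bullet> \<xi>"

definition doubling_C2 :: "'a::euclidean_space set \<Rightarrow> ('a \<Rightarrow> real) set \<Rightarrow> real \<Rightarrow> bool" where
  "doubling_C2 U F D \<longleftrightarrow>
     (\<forall>f\<in>F. \<forall>r>0. \<exists>S. finite S \<and> S \<subseteq> F \<and> real (card S) \<le> D \<and>
        {g\<in>F. C2_dist U f g < r} \<subseteq> (\<Union>s\<in>S. {g. C2_dist U s g < r / 2}))"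

definition cinematic :: "'a::euclidean_space set \<Rightarrow> ('a \<Rightarrow> real) set \<Rightarrow> real \<Rightarrow> real \<Rightarrow> (real \<Rightarrow> real) \<Rightarrow> bool" where
  "cinematic U F K D \<alpha> \<longleftrightarrow>
     K > 0 \<and>
     (\<forall>f\<in>F. C2_on U f) \<and>
     \<comment> \<open>(1) F lies in a ball of diameter K in C^2(U)\<close>
     (\<exists>h0. C2_on U h0 \<and> (\<forall>f\<in>F. C2_dist U f h0 \<le> K / 2)) \<and>
     \<comment> \<open>(2) doubling\<close>
     doubling_C2 U F D \<and>
     \<comment> \<open>(3) cinematic condition\<close>
     (\<forall>f\<in>F. \<forall>g\<in>F. \<forall>\<xi>. norm \<xi> = 1 \<longrightarrow>
        (INF x\<in>U. \<bar>f x - g x\<bar> + norm (grad_on U (\<lambda>z. f z - g z) x)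
                   + \<bar>dd2 U (\<lambda>z. f z - g z) \<xi> x\<bar>) \<ge> inverse K * C2_dist U f g) \<and>
     \<comment> \<open>(4) modulus of continuity\<close>
     (mono_on {0..1} \<alpha> \<and> continuous_on {0..1} \<alpha> \<and> \<alpha> 0 = 0 \<and>
      (\<forall>s\<in>{0<..1}. 0 < \<alpha> s \<and> \<alpha> s \<le> inverse K * s) \<and>
      (\<forall>f\<in>F. \<forall>g\<in>F. \<forall>\<xi>. norm \<xi> = 1 \<longrightarrow> (\<forall>\<eta>\<in>{0<..1}. \<forall>x\<in>U. \<forall>y\<in>U.
          norm (x - y) \<le> \<alpha> \<eta> \<longrightarrow>
          \<bar>dd2 U (\<lambda>z. f z - g z) \<xi> x - dd2 U (\<lambda>z. f z - g z) \<xi> y\<bar> \<le> \<eta>)))"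

definition vnbhd :: "'a::euclidean_space set \<Rightarrow> ('a \<Rightarrow> real) \<Rightarrow> real \<Rightarrow> ('a \<times> real) set" where
  "vnbhd U f \<delta> = {(x, y). x \<in> U \<and> f x - \<delta> \<le> y \<and> y \<le> f x + \<delta>}"

end

theory Submission
  imports Defs
begin

text \<open>
  By Tonelli, the measure of the intersection of the two vertical neighbourhoods is at most
  2 delta times the measure of the sublevel set {x. |f x - g x| <= 2 delta}, so it suffices to show
  that h = f - g, with d = ||h||_{C^2}, has sublevel sets {|h| <= eta} of measure O(eta / d).
  Cut the unit cube into subcubes of side about c / n, where c = 1/K. On each of them the
  cinematic condition and the C^2 bounds force one of |h|, |grad h|, |d_xi d_xi h| to stay above
  c d / 4 throughout. In the first case the sublevel set is empty. In the second, h grows at rate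
  at least c d / 8 along a fixed direction, so the sublevel set has no long chords in that
  direction and disjoint translates of it bound its measure. In the third, connectedness of the
  unit sphere (dimension at least 2) makes the Hessian definite of one sign, so h or -h is
  strongly convex, and contracting towards its minimiser bounds the measure of the slab
  {-eta <= h <= eta}.
\<close>

section \<open>Calculus along segments and strong convexity\<close>

lemma convex_mem_segment_param:
  assumes "convex S" "x \<in> S" "y \<in> S" "t \<in> {0..1}"
  shows "x + t *\<^sub>R (y - x) \<in> S"
  using convexD_alt[OF assms(1-3), of t] assms(4) by (simp add: algebra_simps)

lemma increment_ge_of_derivative_ge:
  fixes \<phi> \<phi>' :: "real \<Rightarrow> real"
  assumes "a \<le> b"
    and "\<And>t. t \<in> {a..b} \<Longrightarrow> (\<phi> has_real_derivative \<phi>' t) (at t within {a..b})"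
    and "\<And>t. t \<in> {a..b} \<Longrightarrow> A \<le> \<phi>' t"
  shows "A * (b - a) \<le> \<phi> b - \<phi> a"
proof -
  obtain t where "t \<in> {a..b}" "\<phi> b - \<phi> a = \<phi>' t * (b - a)"
    using mvt_very_simple[of a b \<phi> "\<lambda>t. (*) (\<phi>' t)"] assms(1,2)
    by (auto simp: has_field_derivative_def)
  with assms(1,3) show ?thesis by (simp add: mult_right_mono)
qed

lemma second_derivative_ge_interpolation:
  fixes \<phi> \<phi>' \<phi>'' :: "real \<Rightarrow> real"
  assumes d1: "\<And>t. t \<in> {0..1} \<Longrightarrow> (\<phi> has_real_derivative \<phi>' t) (at t within {0..1})"
    and d2: "\<And>t. t \<in> {0..1} \<Longrightarrow> (\<phi>' has_real_derivative \<phi>'' t) (at t within {0..1})"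
    and ge: "\<And>t. t \<in> {0..1} \<Longrightarrow> k \<le> \<phi>'' t"
    and s: "s \<in> {0..1}"
  shows "\<phi> s \<le> (1 - s) * \<phi> 0 + s * \<phi> 1 - k / 2 * s * (1 - s)"
proof -
  define \<psi> where "\<psi> t = \<phi> t - k / 2 * t\<^sup>2" for t
  define \<psi>' where "\<psi>' t = \<phi>' t - k * t" for t
  have \<psi>: "(\<psi> has_real_derivative \<psi>' t) (at t within {x..y})"
    if "{x..y} \<subseteq> {0..1}" "t \<in> {x..y}" for x y t
    using DERIV_subset[OF d1 that(1)] that unfolding \<psi>_def \<psi>'_def
    by (auto intro!: derivative_eq_intros)
  have \<psi>'_mono: "\<psi>' x \<le> \<psi>' y" if "0 \<le> x" "x \<le> y" "y \<le> 1" for x y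
  proof -
    have "(\<psi>' has_real_derivative \<phi>'' t - k) (at t within {x..y})" if "t \<in> {x..y}" for t
      using DERIV_subset[OF d2, of t "{x..y}"] that \<open>0 \<le> x\<close> \<open>y \<le> 1\<close> unfolding \<psi>'_def
      by (auto intro!: derivative_eq_intros)
    from increment_ge_of_derivative_ge[OF \<open>x \<le> y\<close> this, of 0] ge that show ?thesis
      by auto
  qed
  have "- \<psi>' s * (s - 0) \<le> - \<psi> s - - \<psi> 0"
    using s \<psi>'_mono \<psi>[of 0 s]
    by (intro increment_ge_of_derivative_ge[where \<phi>' = "\<lambda>t. - \<psi>' t"])
       (auto intro!: derivative_eq_intros)
  moreover have "\<psi>' s * (1 - s) \<le> \<psi> 1 - \<psi> s"
    using s \<psi>'_mono \<psi>[of s 1] by (intro increment_ge_of_derivative_ge) auto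
  ultimately have "(1 - s) * (\<psi> s - \<psi> 0) \<le> s * (\<psi> 1 - \<psi> s)"
    using s mult_left_mono[of "\<psi> s - \<psi> 0" "s * \<psi>' s" "1 - s"]
      mult_left_mono[of "\<psi>' s * (1 - s)" "\<psi> 1 - \<psi> s" s]
    by (auto simp: algebra_simps)
  then show ?thesis unfolding \<psi>_def power2_eq_square by (simp add: field_simps)
qed

lemma has_vector_derivative_along_segment:
  fixes u :: "'a::real_normed_vector \<Rightarrow> 'b::real_normed_vector"
  assumes "convex S" "x \<in> S" "y \<in> S" "t \<in> {0..1}"
    and u: "\<And>z. z \<in> S \<Longrightarrow> (u has_derivative u' z) (at z within S)"
  shows "((\<lambda>t. u (x + t *\<^sub>R (y - x))) has_vector_derivative u' (x + t *\<^sub>R (y - x)) (y - x))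
           (at t within {0..1})"
proof -
  define \<gamma> where "\<gamma> t = x + t *\<^sub>R (y - x)" for t
  have \<gamma>S: "\<gamma> ` {0..1} \<subseteq> S"
    using convex_mem_segment_param[OF assms(1-3)] by (auto simp: \<gamma>_def)
  have "(\<gamma> has_derivative (\<lambda>s. s *\<^sub>R (y - x))) (at t within {0..1})"
    unfolding \<gamma>_def by (auto intro!: derivative_eq_intros)
  moreover have "\<gamma> t \<in> S" using \<gamma>S assms(4) by auto
  then have "(u has_derivative u' (\<gamma> t)) (at (\<gamma> t) within \<gamma> ` {0..1})"
    using has_derivative_subset[OF u \<gamma>S] by blast
  moreover have "linear (u' (\<gamma> t))"
    using u \<open>\<gamma> t \<in> S\<close> has_derivative_linear by blast
  ultimately have "((u \<circ> \<gamma>) has_derivative (\<lambda>s. s *\<^sub>R u' (\<gamma> t) (y - x))) (at t within {0..1})"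
    using diff_chain_within linear_scale by (fastforce simp: o_def)
  then show ?thesis by (simp add: has_vector_derivative_def \<gamma>_def o_def)
qed

definition strongly_convex_on :: "'a::real_normed_vector set \<Rightarrow> real \<Rightarrow> ('a \<Rightarrow> real) \<Rightarrow> bool" where
  "strongly_convex_on S k u \<longleftrightarrow> (\<forall>x\<in>S. \<forall>y\<in>S. \<forall>t\<in>{0..1}.
     u ((1 - t) *\<^sub>R x + t *\<^sub>R y) \<le> (1 - t) * u x + t * u y - k / 2 * t * (1 - t) * (norm (y - x))\<^sup>2)"

lemma strongly_convex_on_if_hessian_ge:
  fixes u :: "'a::real_inner \<Rightarrow> real"
  assumes "convex S"
    and D1: "\<And>z. z \<in> S \<Longrightarrow> (u has_derivative (\<lambda>v. G z \<bullet> v)) (at z within S)"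
    and D2: "\<And>z. z \<in> S \<Longrightarrow> (G has_derivative H z) (at z within S)"
    and ge: "\<And>z v. z \<in> S \<Longrightarrow> k * (norm v)\<^sup>2 \<le> H z v \<bullet> v"
  shows "strongly_convex_on S k u"
  unfolding strongly_convex_on_def
proof (intro ballI)
  fix x y and t :: real assume xy: "x \<in> S" "y \<in> S" and t: "t \<in> {0..1}"
  have seg: "x + s *\<^sub>R (y - x) \<in> S" if "s \<in> {0..1}" for s
    using convex_mem_segment_param[OF \<open>convex S\<close> xy that] .
  let ?\<gamma> = "\<lambda>s. x + s *\<^sub>R (y - x)"
  have "((\<lambda>s. u (?\<gamma> s)) has_real_derivative G (?\<gamma> s) \<bullet> (y - x)) (at s within {0..1})"
    if "s \<in> {0..1}" for s
    using has_vector_derivative_along_segment[OF \<open>convex S\<close> xy that D1]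
    by (simp add: has_real_derivative_iff_has_vector_derivative)
  moreover have "((\<lambda>s. G (?\<gamma> s) \<bullet> (y - x)) has_real_derivative H (?\<gamma> s) (y - x) \<bullet> (y - x))
      (at s within {0..1})" if "s \<in> {0..1}" for s
    using bounded_linear.has_vector_derivative[OF bounded_linear_inner_left
        has_vector_derivative_along_segment[OF \<open>convex S\<close> xy that D2]]
    by (simp add: has_real_derivative_iff_has_vector_derivative)
  moreover have "k * (norm (y - x))\<^sup>2 \<le> H (?\<gamma> s) (y - x) \<bullet> (y - x)" if "s \<in> {0..1}" for s
    using ge seg[OF that] by blast
  ultimately have "u (?\<gamma> t) \<le> (1 - t) * u (?\<gamma> 0) + t * u (?\<gamma> 1) - k * (norm (y - x))\<^sup>2 / 2 * t * (1 - t)"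
    by (rule second_derivative_ge_interpolation[OF _ _ _ t])
  moreover have "(1 - t) *\<^sub>R x + t *\<^sub>R y = x + t *\<^sub>R (y - x)" by (simp add: algebra_simps)
  ultimately show "u ((1 - t) *\<^sub>R x + t *\<^sub>R y) \<le> (1 - t) * u x + t * u y - k / 2 * t * (1 - t) * (norm (y - x))\<^sup>2"
    by (simp add: algebra_simps)
qed

lemma convex_on_if_strongly_convex_on:
  assumes "strongly_convex_on S k u" "0 \<le> k" "convex S"
  shows "convex_on S u"
proof (rule convex_onI[OF _ assms(3)])
  fix t :: real and x y assume t: "0 < t" "t < 1" and xy: "x \<in> S" "y \<in> S"
  have "0 \<le> k / 2 * t * (1 - t) * (norm (y - x))\<^sup>2" using t assms(2) by simp
  then show "u ((1 - t) *\<^sub>R x + t *\<^sub>R y) \<le> (1 - t) * u x + t * u y"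
    using assms(1)[unfolded strongly_convex_on_def, rule_format, OF xy, of t] t by simp
qed

section \<open>Slabs of strongly convex functions\<close>

lemma measure_cube:
  fixes a :: "'a::euclidean_space"
  assumes "0 \<le> r"
  shows "measure lebesgue (cbox a (a + r *\<^sub>R One)) = r ^ DIM('a)"
  using assms by (simp add: measure_lborel_cbox_eq inner_simps)

lemma compact_restrict_preimage:
  fixes u :: "'a::metric_space \<Rightarrow> 'b::topological_space"
  assumes "compact S" "continuous_on S u" "closed C"
  shows "compact {x \<in> S. u x \<in> C}"
proof -
  have "compact (S \<inter> (S \<inter> u -` C))"
    using assms by (intro compact_Int_closed continuous_closed_preimage) (auto intro: compact_imp_closed)
  moreover have "S \<inter> (S \<inter> u -` C) = {x \<in> S. u x \<in> C}" by auto
  ultimately show ?thesis by simp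
qed

lemma compact_abs_sublevel:
  fixes h :: "'a::metric_space \<Rightarrow> real"
  assumes "compact Q" "continuous_on Q h"
  shows "compact {x \<in> Q. \<bar>h x\<bar> \<le> \<eta>}"
proof -
  have "{x \<in> Q. \<bar>h x\<bar> \<le> \<eta>} = {x \<in> Q. h x \<in> {-\<eta>..\<eta>}}" by (auto simp: abs_le_iff)
  then show ?thesis
    using compact_restrict_preimage[OF assms closed_real_atLeastAtMost] by simp
qed

lemma measure_subset_cube_cball_le:
  fixes A :: "'a::euclidean_space set"
  assumes "2 \<le> DIM('a)" "A \<in> sets lebesgue" "A \<subseteq> cbox l (l + One)" "A \<subseteq> cball x0 R"
  shows "measure lebesgue A \<le> 4 * R\<^sup>2"
proof -
  consider "1 \<le> 2 * R" | "0 \<le> 2 * R" "2 * R < 1" | "R < 0" by linarith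
  then show ?thesis
  proof cases
    case 1
    have "measure lebesgue A \<le> measure lebesgue (cbox l (l + 1 *\<^sub>R One))"
      using assms(2,3) by (intro measure_mono_fmeasurable) auto
    also have "\<dots> = 1" using measure_cube[of 1 l] by simp
    also have "\<dots> \<le> (2 * R)\<^sup>2" using 1 by (rule one_le_power)
    finally show ?thesis by (simp add: power_mult_distrib)
  next
    case 2
    have "cball x0 R \<subseteq> cbox (x0 - R *\<^sub>R One) (x0 - R *\<^sub>R One + (2 * R) *\<^sub>R One)"
    proof
      fix y assume "y \<in> cball x0 R"
      then have "\<bar>(y - x0) \<bullet> i\<bar> \<le> R" if "i \<in> Basis" for i
        using Basis_le_norm[OF that, of "y - x0"] by (simp add: dist_norm norm_minus_commute)
      then show "y \<in> cbox (x0 - R *\<^sub>R One) (x0 - R *\<^sub>R One + (2 * R) *\<^sub>R One)"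
        by (force simp: mem_box inner_simps abs_le_iff)
    qed
    then have "measure lebesgue A \<le> measure lebesgue (cbox (x0 - R *\<^sub>R One) (x0 - R *\<^sub>R One + (2 * R) *\<^sub>R One))"
      using assms(2,4) by (intro measure_mono_fmeasurable) auto
    also have "\<dots> = (2 * R) ^ DIM('a)" using 2 by (intro measure_cube) simp
    also have "\<dots> \<le> (2 * R)\<^sup>2" using 2 assms(1) by (intro power_decreasing) auto
    finally show ?thesis by (simp add: power_mult_distrib)
  next
    case 3
    then have "A = {}" using assms(4) by auto
    then show ?thesis by simp
  qed
qed

lemma one_plus_power_le:
  fixes w :: real
  assumes "0 \<le> w" "w \<le> 1"
  shows "(1 + w) ^ n \<le> 1 + real n * 2 ^ n * w"
proof (induction n)
  case (Suc n)
  have "w * (1 + w) ^ n \<le> w * 2 ^ n"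
    using assms by (intro mult_left_mono power_mono) auto
  then have "(1 + w) ^ Suc n \<le> 1 + (real n + 1) * 2 ^ n * w"
    using Suc by (simp add: algebra_simps)
  also have "\<dots> \<le> 1 + real (Suc n) * 2 ^ Suc n * w"
    using assms by (simp add: mult_left_mono mult_right_mono)
  finally show ?case .
qed simp

lemma measure_shell_le_of_homothety:
  fixes Ka S Kb :: "'a::euclidean_space set"
  assumes "Ka \<in> lmeasurable" "S \<in> lmeasurable" "Kb \<in> lmeasurable"
    and "Ka \<inter> S = {}" "Ka \<union> S \<subseteq> Kb" "(\<lambda>y. t *\<^sub>R y + (1 - t) *\<^sub>R x0) ` Kb \<subseteq> Ka" "0 < t"
  shows "measure lebesgue S \<le> ((1 / t) ^ DIM('a) - 1) * measure lebesgue Ka"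
proof -
  have "ennreal (t ^ DIM('a) * measure lebesgue Kb) = emeasure lebesgue ((\<lambda>y. t *\<^sub>R y + (1 - t) *\<^sub>R x0) ` Kb)"
    using emeasure_lebesgue_affine[of t "(1 - t) *\<^sub>R x0" Kb] assms(3,7)
    by (simp add: emeasure_eq_measure2 ennreal_mult)
  also have "\<dots> \<le> emeasure lebesgue Ka"
    using assms(1,6) by (intro emeasure_mono) auto
  finally have "t ^ DIM('a) * measure lebesgue Kb \<le> measure lebesgue Ka"
    using assms(1) by (simp add: emeasure_eq_measure2)
  then have Kb: "measure lebesgue Kb \<le> (1 / t) ^ DIM('a) * measure lebesgue Ka"
    using assms(7) by (simp add: field_simps power_one_over)
  have "measure lebesgue Ka + measure lebesgue S = measure lebesgue (Ka \<union> S)"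
    using assms(1,2,4) by (intro measure_Union[symmetric]) (auto simp: fmeasurable_def)
  also have "\<dots> \<le> measure lebesgue Kb"
    using assms by (intro measure_mono_fmeasurable) auto
  finally show ?thesis using Kb by (simp add: algebra_simps)
qed

lemma strongly_convex_on_growth:
  assumes "strongly_convex_on S k u" "convex S" "x0 \<in> S" "\<And>y. y \<in> S \<Longrightarrow> u x0 \<le> u y" "y \<in> S"
  shows "k / 4 * (norm (y - x0))\<^sup>2 \<le> u y - u x0"
proof -
  have "(1 - 1/2) *\<^sub>R x0 + (1/2) *\<^sub>R y \<in> S" using convexD_alt[OF assms(2,3,5), of "1/2"] by simp
  then have "u x0 \<le> u ((1 - 1/2) *\<^sub>R x0 + (1/2) *\<^sub>R y)" by (rule assms(4))
  also have "\<dots> \<le> (1 - 1/2) * u x0 + 1/2 * u y - k / 2 * (1/2) * (1 - 1/2) * (norm (y - x0))\<^sup>2"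
    using assms(1)[unfolded strongly_convex_on_def, rule_format, OF assms(3,5), of "1/2"] by simp
  finally show ?thesis by simp
qed

lemma strongly_convex_sublevel_measure_le:
  fixes u :: "'a::euclidean_space \<Rightarrow> real"
  assumes "2 \<le> DIM('a)" "convex S" "S \<subseteq> cbox l (l + One)" "strongly_convex_on S k u" "0 < k"
    and "x0 \<in> S" "\<And>y. y \<in> S \<Longrightarrow> u x0 \<le> u y"
    and "A \<in> sets lebesgue" "A \<subseteq> S" "\<And>y. y \<in> A \<Longrightarrow> u y \<le> u x0 + c" "0 \<le> c"
  shows "measure lebesgue A \<le> 16 * c / k"
proof -
  have "A \<subseteq> cball x0 (sqrt (4 * c / k))"
  proof
    fix y assume "y \<in> A"
    then have "k / 4 * (norm (y - x0))\<^sup>2 \<le> c"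
      using strongly_convex_on_growth[OF assms(4,2,6,7)] assms(9,10) by fastforce
    then have "(norm (y - x0))\<^sup>2 \<le> 4 * c / k" using assms(5) by (simp add: field_simps)
    then show "y \<in> cball x0 (sqrt (4 * c / k))"
      by (simp add: dist_norm norm_minus_commute real_le_rsqrt)
  qed
  then have "measure lebesgue A \<le> 4 * (sqrt (4 * c / k))\<^sup>2"
    using assms(3,8,9) by (intro measure_subset_cube_cball_le[OF assms(1)]) auto
  also have "\<dots> = 16 * c / k" using assms(5,11) by simp
  finally show ?thesis .
qed

lemma strongly_convex_slab_measure_le_far_from_min:
  fixes u :: "'a::euclidean_space \<Rightarrow> real"
  assumes dim: "2 \<le> DIM('a)"
    and S: "compact S" "convex S" "S \<subseteq> cbox l (l + One)"
    and u: "continuous_on S u" "strongly_convex_on S k u"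
    and k: "0 < k" and ab: "a < b"
    and x0: "x0 \<in> S" "\<And>y. y \<in> S \<Longrightarrow> u x0 \<le> u y" and far: "2 * (b - a) \<le> a - u x0"
  shows "measure lebesgue {x \<in> S. a \<le> u x \<and> u x \<le> b} \<le> real DIM('a) * 2 ^ (DIM('a) + 5) * (b - a) / k"
proof -
  let ?m = "DIM('a)"
  define \<Delta> where "\<Delta> = a - u x0"
  have \<Delta>: "2 * (b - a) \<le> \<Delta>" "0 < \<Delta>" using far ab by (auto simp: \<Delta>_def)
  define t where "t = \<Delta> / (\<Delta> + 2 * (b - a))"
  have t: "0 < t" "t \<le> 1" using \<Delta> ab by (auto simp: t_def)
  define slab where "slab = {x \<in> S. a \<le> u x \<and> u x \<le> b}"
  define Ka where "Ka = {x \<in> S. u x < a}"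
  define Kb where "Kb = {x \<in> S. u x \<le> b}"
  have slab: "slab \<in> lmeasurable"
    using compact_restrict_preimage[OF S(1) u(1), of "{a..b}"] by (simp add: slab_def lmeasurable_compact)
  have Kb: "Kb \<in> lmeasurable"
    using compact_restrict_preimage[OF S(1) u(1), of "{..b}"] by (simp add: Kb_def lmeasurable_compact)
  have "Ka = S - {x \<in> S. u x \<in> {a..}}" by (auto simp: Ka_def)
  then have Ka: "Ka \<in> lmeasurable"
    using compact_restrict_preimage[OF S(1) u(1), of "{a..}"]
    by (simp add: fmeasurable_Diff lmeasurable_compact[OF S(1)] fmeasurableD lmeasurable_compact)
  \<comment> \<open>Contracting towards the minimiser by the factor t maps {u \<le> b} into {u < a}.\<close>
  have "(\<lambda>y. t *\<^sub>R y + (1 - t) *\<^sub>R x0) ` Kb \<subseteq> Ka"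
  proof clarify
    fix y assume y: "y \<in> Kb"
    have "(1 - t) *\<^sub>R x0 + t *\<^sub>R y \<in> S"
      using convexD_alt[OF S(2) x0(1), of y t] y t by (auto simp: Kb_def)
    moreover have "u ((1 - t) *\<^sub>R x0 + t *\<^sub>R y) \<le> (1 - t) * u x0 + t * u y"
      using convex_onD[OF convex_on_if_strongly_convex_on[OF u(2) _ S(2)]] x0(1) y t k
      by (auto simp: Kb_def)
    moreover have "t * u y \<le> t * b" using y t by (auto simp: Kb_def intro: mult_left_mono)
    moreover have "t * (\<Delta> + (b - a)) < \<Delta>" using \<Delta> ab by (simp add: t_def field_simps)
    ultimately show "t *\<^sub>R y + (1 - t) *\<^sub>R x0 \<in> Ka"
      by (simp add: Ka_def \<Delta>_def add.commute algebra_simps)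
  qed
  then have "measure lebesgue slab \<le> ((1 / t) ^ ?m - 1) * measure lebesgue Ka"
    using Ka slab Kb ab t by (intro measure_shell_le_of_homothety) (auto simp: Ka_def Kb_def slab_def)
  also have "\<dots> \<le> (real ?m * 2 ^ ?m * (2 * (b - a) / \<Delta>)) * (16 * \<Delta> / k)"
  proof (intro mult_mono)
    have "1 / t = 1 + 2 * (b - a) / \<Delta>" using \<Delta> ab by (simp add: t_def field_simps)
    then show "(1 / t) ^ ?m - 1 \<le> real ?m * 2 ^ ?m * (2 * (b - a) / \<Delta>)"
      using one_plus_power_le[of "2 * (b - a) / \<Delta>" ?m] \<Delta> ab by simp
    show "measure lebesgue Ka \<le> 16 * \<Delta> / k"
      using Ka \<Delta> by (intro strongly_convex_sublevel_measure_le[OF dim S(2,3) u(2) k x0])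
        (auto simp: Ka_def \<Delta>_def)
  qed (use \<Delta> ab in auto)
  also have "\<dots> = real ?m * 2 ^ (?m + 5) * (b - a) / k"
    using \<Delta> k by (simp add: field_simps power_add)
  finally show ?thesis by (simp add: slab_def)
qed

lemma strongly_convex_slab_measure_le:
  fixes u :: "'a::euclidean_space \<Rightarrow> real"
  assumes dim: "2 \<le> DIM('a)"
    and S: "compact S" "convex S" "S \<subseteq> cbox l (l + One)"
    and u: "continuous_on S u" "strongly_convex_on S k u"
    and k: "0 < k" and ab: "a < b"
  shows "measure lebesgue {x \<in> S. a \<le> u x \<and> u x \<le> b} \<le> real DIM('a) * 2 ^ (DIM('a) + 5) * (b - a) / k"
proof (cases "S = {}")
  case True
  then show ?thesis using k ab by simp
next
  case False
  let ?m = "DIM('a)"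
  obtain x0 where x0: "x0 \<in> S" "\<And>y. y \<in> S \<Longrightarrow> u x0 \<le> u y"
    using continuous_attains_inf[OF S(1) False u(1)] by auto
  show ?thesis
  proof (cases "a - u x0 < 2 * (b - a)")
    case True
    have "{x \<in> S. a \<le> u x \<and> u x \<le> b} \<in> sets lebesgue"
      using compact_restrict_preimage[OF S(1) u(1), of "{a..b}"] by (simp add: lmeasurable_compact fmeasurableD)
    then have "measure lebesgue {x \<in> S. a \<le> u x \<and> u x \<le> b} \<le> 16 * (3 * (b - a)) / k"
      using True ab by (intro strongly_convex_sublevel_measure_le[OF dim S(2,3) u(2) k x0]) auto
    also have "\<dots> \<le> real ?m * 2 ^ (?m + 5) * (b - a) / k"
    proof -
      have "(2::real) ^ 5 \<le> 2 ^ (?m + 5)" by (intro power_increasing) auto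
      then have "(48::real) \<le> real ?m * 2 ^ (?m + 5)"
        using dim mult_mono[of 2 "real ?m" 32 "2 ^ (?m + 5)"] by simp
      then show ?thesis
        using ab k mult_right_mono[of 48 "real ?m * 2 ^ (?m + 5)" "b - a"] by (intro divide_right_mono) auto
    qed
    finally show ?thesis .
  next
    case False
    then show ?thesis by (intro strongly_convex_slab_measure_le_far_from_min[OF dim S u k ab x0]) auto
  qed
qed

section \<open>Definite Hessians\<close>

lemma connected_continuous_sign:
  fixes \<phi> :: "'a::topological_space \<Rightarrow> real"
  assumes "connected S" "continuous_on S \<phi>" "\<And>x. x \<in> S \<Longrightarrow> \<phi> x \<noteq> 0"
  shows "(\<forall>x\<in>S. 0 < \<phi> x) \<or> (\<forall>x\<in>S. \<phi> x < 0)"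
proof (rule ccontr)
  assume "\<not> ?thesis"
  then obtain x y where "x \<in> S" "y \<in> S" "\<phi> x \<le> 0" "0 \<le> \<phi> y" by (auto simp: not_less)
  moreover have "connected (\<phi> ` S)" by (rule connected_continuous_image[OF assms(2,1)])
  ultimately have "0 \<in> \<phi> ` S" unfolding connected_iff_interval by blast
  then show False using assms(3) by auto
qed

lemma quadratic_form_scale:
  assumes "linear L" "v \<noteq> 0"
  shows "L v \<bullet> v = (norm v)\<^sup>2 * (L (v /\<^sub>R norm v) \<bullet> (v /\<^sub>R norm v))"
proof -
  have "L (v /\<^sub>R norm v) = L v /\<^sub>R norm v" using linear_scale[OF assms(1)] by simp
  then show ?thesis using assms(2) by (simp add: power2_eq_square field_simps)
qed

lemma definite_if_abs_quadratic_form_ge: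
  fixes H :: "'a::euclidean_space \<Rightarrow> 'a \<Rightarrow> 'a"
  assumes "2 \<le> DIM('a)" "connected Q"
    and cont: "\<And>i. i \<in> Basis \<Longrightarrow> continuous_on Q (\<lambda>x. H x i)"
    and lin: "\<And>x. x \<in> Q \<Longrightarrow> linear (H x)"
    and ge: "\<And>x \<xi>. x \<in> Q \<Longrightarrow> norm \<xi> = 1 \<Longrightarrow> k \<le> \<bar>H x \<xi> \<bullet> \<xi>\<bar>" and "0 < k"
  shows "(\<forall>x\<in>Q. \<forall>v. k * (norm v)\<^sup>2 \<le> H x v \<bullet> v) \<or> (\<forall>x\<in>Q. \<forall>v. H x v \<bullet> v \<le> - k * (norm v)\<^sup>2)"
proof -
  let ?q = "\<lambda>p. H (fst p) (snd p) \<bullet> snd p"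
  have "continuous_on (Q \<times> UNIV) (\<lambda>p. \<Sum>i\<in>Basis. (snd p \<bullet> i) * (H (fst p) i \<bullet> snd p))"
    using cont by (intro continuous_intros continuous_on_compose2[OF cont]) auto
  moreover have "(\<Sum>i\<in>Basis. (snd p \<bullet> i) * (H (fst p) i \<bullet> snd p)) = ?q p" if "p \<in> Q \<times> UNIV" for p
    using Linear_Algebra.linear_componentwise[OF lin] that by auto
  ultimately have "continuous_on (Q \<times> UNIV) ?q"
    by (rule continuous_on_eq)
  then have "continuous_on (Q \<times> sphere 0 1) ?q"
    by (rule continuous_on_subset) auto
  moreover have "?q p \<noteq> 0" if "p \<in> Q \<times> sphere 0 1" for p
    using ge[of "fst p" "snd p"] that \<open>0 < k\<close> by auto
  moreover have "connected (Q \<times> sphere (0::'a) 1)"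
    using assms(1,2) by (simp add: connected_sphere)
  ultimately have "(\<forall>p\<in>Q \<times> sphere 0 1. 0 < ?q p) \<or> (\<forall>p\<in>Q \<times> sphere 0 1. ?q p < 0)"
    using connected_continuous_sign by blast
  then obtain \<sigma> :: real where \<sigma>: "\<sigma> = 1 \<or> \<sigma> = -1"
    and sign: "\<And>x \<xi>. x \<in> Q \<Longrightarrow> norm \<xi> = 1 \<Longrightarrow> 0 < \<sigma> * (H x \<xi> \<bullet> \<xi>)"
  proof (elim disjE)
    assume "\<forall>p\<in>Q \<times> sphere 0 1. 0 < ?q p"
    then show ?thesis by (intro that[of 1]) auto
  next
    assume "\<forall>p\<in>Q \<times> sphere 0 1. ?q p < 0"
    then show ?thesis by (intro that[of "-1"]) auto
  qed
  have unit: "k \<le> \<sigma> * (H x \<xi> \<bullet> \<xi>)" if "x \<in> Q" "norm \<xi> = 1" for x \<xi>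
    using ge[OF that] sign[OF that] \<sigma> by auto
  have all: "k * (norm v)\<^sup>2 \<le> \<sigma> * (H x v \<bullet> v)" if "x \<in> Q" for x v
  proof (cases "v = 0")
    case True
    then show ?thesis using linear_0[OF lin[OF that]] by simp
  next
    case False
    have "(norm v)\<^sup>2 * k \<le> (norm v)\<^sup>2 * (\<sigma> * (H x (v /\<^sub>R norm v) \<bullet> (v /\<^sub>R norm v)))"
      using unit[OF that, of "v /\<^sub>R norm v"] False by (intro mult_left_mono) auto
    then show ?thesis using quadratic_form_scale[OF lin[OF that] False] by (simp add: algebra_simps)
  qed
  from \<sigma> show ?thesis
  proof
    assume "\<sigma> = 1"
    then show ?thesis using all by simp
  next
    assume "\<sigma> = -1"
    have "H x v \<bullet> v \<le> - k * (norm v)\<^sup>2" if "x \<in> Q" for x v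
      using all[OF that, of v] \<open>\<sigma> = -1\<close> by simp
    then show ?thesis by blast
  qed
qed

lemma measure_abs_le_of_hessian_abs_ge:
  fixes h :: "'a::euclidean_space \<Rightarrow> real"
  assumes dim: "2 \<le> DIM('a)" and S: "compact S" "convex S" "S \<subseteq> cbox l (l + One)"
    and D1: "\<And>z. z \<in> S \<Longrightarrow> (h has_derivative (\<lambda>v. G z \<bullet> v)) (at z within S)"
    and D2: "\<And>z. z \<in> S \<Longrightarrow> (G has_derivative H z) (at z within S)"
    and cont: "\<And>i. i \<in> Basis \<Longrightarrow> continuous_on S (\<lambda>x. H x i)"
    and ge: "\<And>x \<xi>. x \<in> S \<Longrightarrow> norm \<xi> = 1 \<Longrightarrow> k \<le> \<bar>H x \<xi> \<bullet> \<xi>\<bar>" and k: "0 < k" and \<eta>: "0 < \<eta>"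
  shows "measure lebesgue {x \<in> S. \<bar>h x\<bar> \<le> \<eta>} \<le> real DIM('a) * 2 ^ (DIM('a) + 6) * \<eta> / k"
proof -
  have slab: "measure lebesgue {x \<in> S. \<bar>h x\<bar> \<le> \<eta>} \<le> real DIM('a) * 2 ^ (DIM('a) + 6) * \<eta> / k"
    if "strongly_convex_on S k (\<lambda>x. s * h x)" "\<bar>s\<bar> = 1" for s
  proof -
    have "continuous_on S (\<lambda>x. s * h x)"
      using has_derivative_continuous_on[OF D1] by (intro continuous_intros)
    from strongly_convex_slab_measure_le[OF dim S this that(1) k, of "- \<eta>" \<eta>]
    have "measure lebesgue {x \<in> S. - \<eta> \<le> s * h x \<and> s * h x \<le> \<eta>} \<le> real DIM('a) * 2 ^ (DIM('a) + 5) * (2 * \<eta>) / k"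
      using \<eta> by simp
    moreover have "{x \<in> S. - \<eta> \<le> s * h x \<and> s * h x \<le> \<eta>} = {x \<in> S. \<bar>h x\<bar> \<le> \<eta>}"
      using that(2) by (auto simp: abs_if split: if_splits)
    moreover have "real DIM('a) * 2 ^ (DIM('a) + 5) * (2 * \<eta>) / k = real DIM('a) * 2 ^ (DIM('a) + 6) * \<eta> / k"
      by (simp add: power_add)
    ultimately show ?thesis by simp
  qed
  have lin: "linear (H x)" if "x \<in> S" for x using D2[OF that] has_derivative_linear by blast
  from definite_if_abs_quadratic_form_ge[OF dim convex_connected[OF S(2)] cont lin ge k]
  show ?thesis
  proof
    assume "\<forall>x\<in>S. \<forall>v. k * (norm v)\<^sup>2 \<le> H x v \<bullet> v"
    then have "strongly_convex_on S k (\<lambda>x. 1 * h x)"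
      using strongly_convex_on_if_hessian_ge[OF S(2) D1 D2] by simp
    then show ?thesis by (rule slab) simp
  next
    assume neg: "\<forall>x\<in>S. \<forall>v. H x v \<bullet> v \<le> - k * (norm v)\<^sup>2"
    have "((\<lambda>x. -1 * h x) has_derivative (\<lambda>v. (- G z) \<bullet> v)) (at z within S)" if "z \<in> S" for z
      using has_derivative_minus[OF D1[OF that]] by simp
    moreover have "((\<lambda>x. - G x) has_derivative (\<lambda>v. - H z v)) (at z within S)" if "z \<in> S" for z
      using has_derivative_minus[OF D2[OF that]] .
    moreover have "k * (norm v)\<^sup>2 \<le> - H z v \<bullet> v" if "z \<in> S" for z v
    proof -
      have "H z v \<bullet> v \<le> - k * (norm v)\<^sup>2" using neg that by blast
      then show ?thesis by simp
    qed
    ultimately have "strongly_convex_on S k (\<lambda>x. -1 * h x)"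
      by (rule strongly_convex_on_if_hessian_ge[OF S(2)])
    then show ?thesis by (rule slab) simp
  qed
qed

section \<open>Large gradients\<close>

lemma measure_le_of_disjoint_translates:
  fixes A B :: "'a::euclidean_space set"
  assumes "A \<in> lmeasurable" "B \<in> lmeasurable"
    and "disjoint_family_on (\<lambda>p. (+) (v p) ` A) {..<N}" "(\<Union>p<N. (+) (v p) ` A) \<subseteq> B"
  shows "real N * measure lebesgue A \<le> measure lebesgue B"
proof -
  have T: "(+) (v p) ` A \<in> lmeasurable" for p using measurable_translation[OF assms(1)] .
  have "real N * measure lebesgue A = (\<Sum>p<N. measure lebesgue ((+) (v p) ` A))"
    by (simp add: measure_translation)
  also have "\<dots> = measure lebesgue (\<Union>p<N. (+) (v p) ` A)"
  proof (rule measure_finite_Union[symmetric])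
    show "(\<lambda>p. (+) (v p) ` A) ` {..<N} \<subseteq> sets lebesgue" using T by auto
    show "emeasure lebesgue ((+) (v p) ` A) \<noteq> \<infinity>" for p using fmeasurableD2[OF T] by simp
  qed (use assms(3) in auto)
  also have "\<dots> \<le> measure lebesgue B"
    using assms(2,4) T by (intro measure_mono_fmeasurable) auto
  finally show ?thesis .
qed

lemma nat_multiple_between:
  fixes r \<tau> :: real
  assumes "0 < \<tau>" "\<tau> \<le> r"
  obtains N :: nat where "1 \<le> N" "real N * \<tau> \<le> r" "r \<le> 2 * real N * \<tau>"
proof -
  define N where "N = nat \<lfloor>r / \<tau>\<rfloor>"
  have fl: "1 \<le> \<lfloor>r / \<tau>\<rfloor>" "real_of_int \<lfloor>r / \<tau>\<rfloor> \<le> r / \<tau>" "r / \<tau> < real_of_int \<lfloor>r / \<tau>\<rfloor> + 1"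
    using assms by (auto simp: le_floor_iff)
  have realN: "real N = real_of_int \<lfloor>r / \<tau>\<rfloor>" using fl(1) by (simp add: N_def)
  have N: "1 \<le> N" using fl(1) by (simp add: N_def le_nat_iff)
  have lower: "real N * \<tau> \<le> r" using fl(2) realN assms(1) by (simp add: le_divide_eq)
  have "r < (real N + 1) * \<tau>" by (metis fl(3) pos_divide_less_eq[OF assms(1)] realN)
  also have "\<dots> \<le> (2 * real N) * \<tau>" using N assms(1) by (intro mult_right_mono) auto
  finally show ?thesis using that[OF N lower] by simp
qed

lemma disjoint_translates_of_short_chords:
  fixes A :: "'a::real_vector set"
  assumes chord: "\<And>x s. x \<in> A \<Longrightarrow> x + s *\<^sub>R e \<in> A \<Longrightarrow> s < \<tau>" and "0 < \<tau>"
  shows "disjoint_family (\<lambda>p::nat. (+) ((real p * \<tau>) *\<^sub>R e) ` A)"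
proof -
  have no_shift: "(real p * \<tau>) *\<^sub>R e + x \<noteq> (real q * \<tau>) *\<^sub>R e + x'"
    if "x \<in> A" "x' \<in> A" "p < q" for p q :: nat and x x'
  proof
    assume "(real p * \<tau>) *\<^sub>R e + x = (real q * \<tau>) *\<^sub>R e + x'"
    then have "x = ((real q * \<tau>) *\<^sub>R e + x') - (real p * \<tau>) *\<^sub>R e"
      by (metis add_diff_cancel_left')
    then have "x = x' + (real (q - p) * \<tau>) *\<^sub>R e"
      using \<open>p < q\<close> by (simp add: of_nat_diff algebra_simps scaleR_diff_left)
    then have "real (q - p) * \<tau> < 1 * \<tau>" using chord that(1,2) by auto
    moreover have "1 \<le> real (q - p)" using \<open>p < q\<close> by simp
    ultimately show False using \<open>0 < \<tau>\<close> by (simp add: mult_le_cancel_right1)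
  qed
  show ?thesis
    unfolding disjoint_family_on_def using no_shift by (auto simp: neq_iff) (metis no_shift)
qed

lemma measure_le_of_short_chords:
  fixes A :: "'a::euclidean_space set"
  assumes A: "A \<in> sets lebesgue" "A \<subseteq> cbox l (l + r *\<^sub>R One)"
    and r: "0 < r" and \<tau>: "0 < \<tau>" and e: "norm e = 1"
    and chord: "\<And>x s. x \<in> A \<Longrightarrow> x + s *\<^sub>R e \<in> A \<Longrightarrow> s < \<tau>"
  shows "measure lebesgue A \<le> 2 * 3 ^ DIM('a) * r ^ (DIM('a) - 1) * \<tau>"
proof -
  let ?m = "DIM('a)"
  have A_fm: "A \<in> lmeasurable" using A by (intro fmeasurableI2[OF lmeasurable_cbox])
  have rm: "r ^ ?m = r ^ (?m - 1) * r" using power_minus_mult[OF DIM_positive[where 'a='a], of r] by simp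
  have "0 \<le> r ^ (?m - 1)" using r by simp
  show ?thesis
  proof (cases "r < \<tau>")
    case True
    have "measure lebesgue A \<le> measure lebesgue (cbox l (l + r *\<^sub>R One))"
      using A by (intro measure_mono_fmeasurable) auto
    also have "\<dots> = r ^ (?m - 1) * r" using measure_cube[of r l] r rm by simp
    also have "\<dots> \<le> 1 * (r ^ (?m - 1) * \<tau>)"
      using True \<open>0 \<le> r ^ (?m - 1)\<close> by (simp add: mult_left_mono)
    also have "\<dots> \<le> (2 * 3 ^ ?m) * (r ^ (?m - 1) * \<tau>)"
    proof (rule mult_right_mono)
      have "(1::real) \<le> 3 ^ ?m" by (rule one_le_power) simp
      then show "1 \<le> (2 * 3 ^ ?m :: real)" by linarith
    qed (use \<open>0 \<le> r ^ (?m - 1)\<close> \<tau> in simp)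
    finally show ?thesis by (simp add: mult.assoc)
  next
    case False
    then have "\<tau> \<le> r" by simp
    then obtain N where N: "1 \<le> N" "real N * \<tau> \<le> r" "r \<le> 2 * real N * \<tau>"
      by (rule nat_multiple_between[OF \<tau>])
    define v where "v p = (real p * \<tau>) *\<^sub>R e" for p :: nat
    have "disjoint_family_on (\<lambda>p. (+) (v p) ` A) {..<N}"
      using disjoint_family_on_mono[OF subset_UNIV disjoint_translates_of_short_chords[of A e \<tau>, OF chord \<tau>]]
      unfolding v_def .
    moreover have "(\<Union>p<N. (+) (v p) ` A) \<subseteq> cbox (l - r *\<^sub>R One) (l - r *\<^sub>R One + (3 * r) *\<^sub>R One)"
    proof clarify
      fix p x assume "p < N" "x \<in> A"
      have "\<bar>v p \<bullet> i\<bar> \<le> r" if "i \<in> Basis" for i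
      proof -
        have "\<bar>v p \<bullet> i\<bar> \<le> real p * \<tau> * 1"
          using Basis_le_norm[OF that, of e] e \<tau> by (simp add: v_def abs_mult mult_left_le)
        also have "\<dots> \<le> r" using \<open>p < N\<close> N(2) \<tau> by (smt (verit) mult_right_mono of_nat_less_iff)
        finally show ?thesis .
      qed
      then show "v p + x \<in> cbox (l - r *\<^sub>R One) (l - r *\<^sub>R One + (3 * r) *\<^sub>R One)"
        using A(2) \<open>x \<in> A\<close> by (force simp: mem_box inner_simps abs_le_iff)
    qed
    ultimately have "real N * measure lebesgue A \<le> measure lebesgue (cbox (l - r *\<^sub>R One) (l - r *\<^sub>R One + (3 * r) *\<^sub>R One))"
      by (intro measure_le_of_disjoint_translates[OF A_fm lmeasurable_cbox])
    also have "\<dots> = 3 ^ ?m * r ^ (?m - 1) * r"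
      using measure_cube[of "3 * r" "l - r *\<^sub>R One"] r rm by (simp add: power_mult_distrib)
    also have "\<dots> \<le> 3 ^ ?m * r ^ (?m - 1) * (2 * real N * \<tau>)"
      using N(3) \<open>0 \<le> r ^ (?m - 1)\<close> by (intro mult_left_mono) auto
    finally have "real N * measure lebesgue A \<le> real N * (2 * 3 ^ ?m * r ^ (?m - 1) * \<tau>)"
      by (simp add: algebra_simps)
    then show ?thesis using N(1) by simp
  qed
qed

lemma measure_abs_le_of_directional_derivative_ge:
  fixes h :: "'a::euclidean_space \<Rightarrow> real"
  assumes r: "0 < r"
    and D1: "\<And>z. z \<in> cbox l (l + r *\<^sub>R One) \<Longrightarrow>
               (h has_derivative (\<lambda>v. G z \<bullet> v)) (at z within cbox l (l + r *\<^sub>R One))"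
    and e: "norm e = 1" and ge: "\<And>z. z \<in> cbox l (l + r *\<^sub>R One) \<Longrightarrow> \<gamma> \<le> G z \<bullet> e"
    and \<gamma>: "0 < \<gamma>" and \<eta>: "0 < \<eta>"
  shows "measure lebesgue {x \<in> cbox l (l + r *\<^sub>R One). \<bar>h x\<bar> \<le> \<eta>}
           \<le> 8 * 3 ^ DIM('a) * r ^ (DIM('a) - 1) * \<eta> / \<gamma>"
proof -
  let ?Q = "cbox l (l + r *\<^sub>R One)"
  define A where "A = {x \<in> ?Q. \<bar>h x\<bar> \<le> \<eta>}"
  have "compact A"
    unfolding A_def by (rule compact_abs_sublevel[OF compact_cbox has_derivative_continuous_on[OF D1]])
  have chord: "s < 4 * \<eta> / \<gamma>" if "x \<in> A" "x + s *\<^sub>R e \<in> A" for x s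
  proof (rule ccontr)
    assume "\<not> s < 4 * \<eta> / \<gamma>"
    then have s: "4 * \<eta> \<le> s * \<gamma>" using \<gamma> by (simp add: field_simps)
    have xQ: "x \<in> ?Q" "x + s *\<^sub>R e \<in> ?Q" using that by (auto simp: A_def)
    let ?\<phi> = "\<lambda>t. h (x + t *\<^sub>R (x + s *\<^sub>R e - x))"
    have "s * \<gamma> * (1 - 0) \<le> ?\<phi> 1 - ?\<phi> 0"
    proof (rule increment_ge_of_derivative_ge)
      fix t :: real assume t: "t \<in> {0..1}"
      show "(?\<phi> has_real_derivative G (x + t *\<^sub>R (x + s *\<^sub>R e - x)) \<bullet> (x + s *\<^sub>R e - x)) (at t within {0..1})"
        using has_vector_derivative_along_segment[OF convex_box(1) xQ t D1]
        by (simp add: has_real_derivative_iff_has_vector_derivative)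
      have "0 < s * \<gamma>" using s \<eta> by linarith
      then have "0 \<le> s" using \<gamma> by (simp add: zero_less_mult_iff)
      then show "s * \<gamma> \<le> G (x + t *\<^sub>R (x + s *\<^sub>R e - x)) \<bullet> (x + s *\<^sub>R e - x)"
        using ge[OF convex_mem_segment_param[OF convex_box(1) xQ t]] by (simp add: mult_left_mono)
    qed simp
    then show False using that s \<eta> by (auto simp: A_def)
  qed
  have "measure lebesgue A \<le> 2 * 3 ^ DIM('a) * r ^ (DIM('a) - 1) * (4 * \<eta> / \<gamma>)"
    using fmeasurableD[OF lmeasurable_compact[OF \<open>compact A\<close>]] r \<gamma> \<eta> e chord
    by (intro measure_le_of_short_chords[of A l r]) (auto simp: A_def)
  then show ?thesis by (simp add: A_def)
qed

section \<open>Sublevel sets in the unit cube\<close>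

lemma norm_diff_le_in_cube:
  fixes x y :: "'a::euclidean_space"
  assumes "x \<in> cbox l (l + r *\<^sub>R One)" "y \<in> cbox l (l + r *\<^sub>R One)"
  shows "norm (x - y) \<le> real DIM('a) * r"
proof -
  have "norm (x - y) \<le> (\<Sum>i\<in>Basis. \<bar>(x - y) \<bullet> i\<bar>)" by (rule norm_le_l1)
  also have "\<dots> \<le> (\<Sum>i\<in>(Basis::'a set). r)"
    using assms by (intro sum_mono) (force simp: mem_box inner_simps abs_le_iff)
  finally show ?thesis by simp
qed

lemma onorm_inner_le: "onorm (\<lambda>v. w \<bullet> v) \<le> norm w"
  by (rule onorm_bound) (auto simp: Cauchy_Schwarz_ineq2)

lemma variation_le_in_cube:
  fixes h :: "'a::euclidean_space \<Rightarrow> real" and l :: 'a and r :: real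
  defines "Q \<equiv> cbox l (l + r *\<^sub>R One)"
  assumes D1: "\<And>z. z \<in> Q \<Longrightarrow> (h has_derivative (\<lambda>v. G z \<bullet> v)) (at z within Q)"
    and D2: "\<And>z. z \<in> Q \<Longrightarrow> (G has_derivative H z) (at z within Q)"
    and bG: "\<And>x. x \<in> Q \<Longrightarrow> norm (G x) \<le> d" and bH: "\<And>x. x \<in> Q \<Longrightarrow> onorm (H x) \<le> d"
    and xy: "x \<in> Q" "y \<in> Q"
  shows "\<bar>h x - h y\<bar> \<le> d * (real DIM('a) * r)" "norm (G x - G y) \<le> d * (real DIM('a) * r)"
proof -
  have "0 \<le> d" using bG[OF xy(1)] norm_ge_zero order_trans by blast
  then have diam: "d * norm (x - y) \<le> d * (real DIM('a) * r)"
    using norm_diff_le_in_cube[OF xy[unfolded Q_def]] by (rule mult_left_mono[rotated])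
  show "\<bar>h x - h y\<bar> \<le> d * (real DIM('a) * r)"
    using differentiable_bound[OF _ D1 order_trans[OF onorm_inner_le bG] xy] diam by (simp add: Q_def)
  show "norm (G x - G y) \<le> d * (real DIM('a) * r)"
    using differentiable_bound[OF _ D2 bH xy] diam by (simp add: Q_def)
qed

lemma measure_sublevel_small_cube:
  fixes h :: "'a::euclidean_space \<Rightarrow> real" and l :: 'a and r :: real
  defines "Q \<equiv> cbox l (l + r *\<^sub>R One)"
  assumes dim: "2 \<le> DIM('a)" and r: "0 < r" "r \<le> 1" "real DIM('a) * r \<le> c / 16"
    and D1: "\<And>z. z \<in> Q \<Longrightarrow> (h has_derivative (\<lambda>v. G z \<bullet> v)) (at z within Q)"
    and D2: "\<And>z. z \<in> Q \<Longrightarrow> (G has_derivative H z) (at z within Q)"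
    and cont: "\<And>i. i \<in> Basis \<Longrightarrow> continuous_on Q (\<lambda>x. H x i)"
    and bG: "\<And>x. x \<in> Q \<Longrightarrow> norm (G x) \<le> d" and bH: "\<And>x. x \<in> Q \<Longrightarrow> onorm (H x) \<le> d"
    and lower: "\<And>x \<xi>. x \<in> Q \<Longrightarrow> norm \<xi> = 1 \<Longrightarrow> c * d \<le> \<bar>h x\<bar> + norm (G x) + \<bar>H x \<xi> \<bullet> \<xi>\<bar>"
    and c: "0 < c" and d: "0 < d" and \<eta>: "0 < \<eta>" and small: "8 * \<eta> \<le> c * d"
  shows "measure lebesgue {x \<in> Q. \<bar>h x\<bar> \<le> \<eta>}
           \<le> (64 * 3 ^ DIM('a) + real DIM('a) * 2 ^ (DIM('a) + 8)) * \<eta> / (c * d)"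
proof -
  let ?m = "DIM('a)" and ?\<kappa> = "c * d"
  have \<kappa>: "0 < ?\<kappa>" using c d by simp
  have l: "l \<in> Q" using r by (simp add: Q_def mem_box inner_simps)
  have "d * (real ?m * r) \<le> ?\<kappa> / 16" using r(3) d by (simp add: mult_left_mono)
  then have h_var: "\<bar>h x - h l\<bar> \<le> ?\<kappa> / 16" and G_var: "norm (G x - G l) \<le> ?\<kappa> / 16"
    if "x \<in> Q" for x
    using variation_le_in_cube[OF D1[unfolded Q_def] D2[unfolded Q_def] bG[unfolded Q_def]
        bH[unfolded Q_def] that[unfolded Q_def] l[unfolded Q_def]] by linarith+
  have pos: "0 \<le> 64 * 3 ^ ?m * \<eta> / ?\<kappa>" "0 \<le> real ?m * 2 ^ (?m + 8) * \<eta> / ?\<kappa>"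
    using \<kappa> \<eta> by auto
  \<comment> \<open>h and G vary by at most c d / 16 on Q, so one of the three terms of the lower bound
    stays above c d / 4 on all of Q.\<close>
  have "measure lebesgue {x \<in> Q. \<bar>h x\<bar> \<le> \<eta>} \<le> 64 * 3 ^ ?m * \<eta> / ?\<kappa> \<or>
        measure lebesgue {x \<in> Q. \<bar>h x\<bar> \<le> \<eta>} \<le> real ?m * 2 ^ (?m + 8) * \<eta> / ?\<kappa>"
  proof -
    consider "?\<kappa> / 4 < \<bar>h l\<bar>" | "?\<kappa> / 4 \<le> norm (G l)" | "\<bar>h l\<bar> \<le> ?\<kappa> / 4" "norm (G l) < ?\<kappa> / 4"
      by linarith
    then show ?thesis
    proof cases
      case 1
      have "\<eta> < \<bar>h x\<bar>" if "x \<in> Q" for x using h_var[OF that] 1 small by linarith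
      then have "{x \<in> Q. \<bar>h x\<bar> \<le> \<eta>} = {}" by force
      then have "measure lebesgue {x \<in> Q. \<bar>h x\<bar> \<le> \<eta>} = 0" by (simp only: measure_empty)
      then show ?thesis using pos by linarith
    next
      case 2
      define e where "e = G l /\<^sub>R norm (G l)"
      have "0 < norm (G l)" using 2 \<kappa> by linarith
      then have e: "norm e = 1" by (simp add: e_def)
      have "?\<kappa> / 8 \<le> G x \<bullet> e" if "x \<in> Q" for x
      proof -
        have "G l \<bullet> e = norm (G l)"
          using \<open>0 < norm (G l)\<close> by (simp add: e_def dot_square_norm power2_eq_square)
        moreover have "\<bar>(G x - G l) \<bullet> e\<bar> \<le> ?\<kappa> / 16"
          using Cauchy_Schwarz_ineq2[of "G x - G l" e] G_var[OF that] e by simp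
        ultimately show ?thesis
          using 2 abs_ge_minus_self[of "(G x - G l) \<bullet> e"] unfolding inner_diff_left by linarith
      qed
      then have "measure lebesgue {x \<in> Q. \<bar>h x\<bar> \<le> \<eta>} \<le> 8 * 3 ^ ?m * r ^ (?m - 1) * \<eta> / (?\<kappa> / 8)"
        unfolding Q_def using \<kappa> \<eta> r(1) e D1
        by (intro measure_abs_le_of_directional_derivative_ge) (auto simp: Q_def)
      also have "\<dots> \<le> 64 * 3 ^ ?m * \<eta> / ?\<kappa>"
        using r \<kappa> \<eta> power_le_one[of r "?m - 1"] by (simp add: field_simps)
      finally show ?thesis ..
    next
      case 3
      have "?\<kappa> / 4 \<le> \<bar>H x \<xi> \<bullet> \<xi>\<bar>" if "x \<in> Q" "norm \<xi> = 1" for x \<xi>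
        using lower[OF that] h_var[OF that(1)] G_var[OF that(1)] norm_triangle_ineq2[of "G x" "G l"] 3
        by linarith
      moreover have "Q \<subseteq> cbox l (l + One)"
        using r by (force simp: Q_def mem_box inner_simps)
      ultimately have "measure lebesgue {x \<in> Q. \<bar>h x\<bar> \<le> \<eta>} \<le> real ?m * 2 ^ (?m + 6) * \<eta> / (?\<kappa> / 4)"
        using \<kappa> \<eta> by (intro measure_abs_le_of_hessian_abs_ge[OF dim _ _ _ D1 D2 cont]) (auto simp: Q_def)
      also have "\<dots> = real ?m * 2 ^ (?m + 8) * \<eta> / ?\<kappa>" by (simp add: power_add)
      finally show ?thesis ..
    qed
  qed
  then show ?thesis using pos by (auto simp: add_divide_distrib distrib_right)
qed

lemma unit_cube_grid:
  assumes "0 < N"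
  obtains L :: "'a::euclidean_space set"
  where "finite L" "card L \<le> N ^ DIM('a)"
    and "\<And>l. l \<in> L \<Longrightarrow> cbox l (l + (1 / real N) *\<^sub>R One) \<subseteq> cbox 0 One"
    and "cbox 0 One \<subseteq> (\<Union>l\<in>L. cbox l (l + (1 / real N) *\<^sub>R One))"
proof
  define corner where "corner p = (\<Sum>i\<in>Basis. (real (p i) / real N) *\<^sub>R i)" for p :: "'a \<Rightarrow> nat"
  define I where "I = (Basis :: 'a set) \<rightarrow>\<^sub>E {..<N}"
  let ?cube = "\<lambda>l. cbox l (l + (1 / real N) *\<^sub>R One)"
  have mem: "x \<in> ?cube (corner p) \<longleftrightarrow> (\<forall>i\<in>Basis. real (p i) \<le> real N * (x \<bullet> i) \<and> real N * (x \<bullet> i) \<le> real (p i) + 1)"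
    for x p using assms
    by (simp add: corner_def mem_box inner_simps inner_sum_left inner_Basis if_distrib field_simps
        cong: if_cong)
  show "finite (corner ` I)" by (simp add: I_def finite_PiE)
  show "card (corner ` I) \<le> N ^ DIM('a)"
    using card_image_le[of I corner] by (simp add: I_def card_PiE finite_PiE)
  show "?cube l \<subseteq> cbox 0 One" if l: "l \<in> corner ` I" for l
  proof
    fix x assume x: "x \<in> ?cube l"
    obtain p where p: "p \<in> I" "l = corner p" using l by auto
    have "0 \<le> real N * (x \<bullet> i) \<and> real N * (x \<bullet> i) \<le> real N" if "i \<in> Basis" for i
    proof -
      have "p i < N" using p(1) that by (auto simp: I_def PiE_iff)
      then have "real (p i) + 1 \<le> real N" by (metis Suc_leI of_nat_Suc of_nat_le_iff add.commute)
      moreover have "real (p i) \<le> real N * (x \<bullet> i) \<and> real N * (x \<bullet> i) \<le> real (p i) + 1"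
        using x p(2) mem[of x p] that by simp
      ultimately show ?thesis by linarith
    qed
    then show "x \<in> cbox 0 One" using assms by (auto simp: mem_box zero_le_mult_iff)
  qed
  show "cbox 0 One \<subseteq> (\<Union>l\<in>corner ` I. ?cube l)"
  proof
    fix x :: 'a assume x: "x \<in> cbox 0 One"
    define p where "p = restrict (\<lambda>i. min (N - 1) (nat \<lfloor>real N * (x \<bullet> i)\<rfloor>)) Basis"
    have "p \<in> I" using assms by (auto simp: p_def I_def)
    moreover have "x \<in> ?cube (corner p)" unfolding mem
    proof
      fix i :: 'a assume i: "i \<in> Basis"
      have "0 \<le> real N * (x \<bullet> i)" "real N * (x \<bullet> i) \<le> real N"
        using x i assms by (auto simp: mem_box mult_left_le)
      then show "real (p i) \<le> real N * (x \<bullet> i) \<and> real N * (x \<bullet> i) \<le> real (p i) + 1"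
        using i assms by (auto simp: p_def min_def of_nat_diff not_le) linarith+
    qed
    ultimately show "x \<in> (\<Union>l\<in>corner ` I. ?cube l)" by blast
  qed
qed

text \<open>The summand 8 covers the trivial case c d < 8 eta; otherwise at most (16 m / c + 1)^m
  subcubes each contribute the bound of the small-cube estimate.\<close>
definition sublevel_const :: "real \<Rightarrow> nat \<Rightarrow> real" where
  "sublevel_const c m = (8 + (16 * real m / c + 1) ^ m * (64 * 3 ^ m + real m * 2 ^ (m + 8))) / c"

lemma sublevel_const_pos: "0 < c \<Longrightarrow> 0 < sublevel_const c m"
  unfolding sublevel_const_def by (intro divide_pos_pos add_pos_nonneg mult_nonneg_nonneg) simp_all

lemma measure_sublevel_unit_cube:
  fixes h :: "'a::euclidean_space \<Rightarrow> real"
  defines "U \<equiv> cbox 0 (One :: 'a)"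
  assumes dim: "2 \<le> DIM('a)"
    and D1: "\<And>z. z \<in> U \<Longrightarrow> (h has_derivative (\<lambda>v. G z \<bullet> v)) (at z within U)"
    and D2: "\<And>z. z \<in> U \<Longrightarrow> (G has_derivative H z) (at z within U)"
    and cont: "\<And>i. i \<in> Basis \<Longrightarrow> continuous_on U (\<lambda>x. H x i)"
    and bG: "\<And>x. x \<in> U \<Longrightarrow> norm (G x) \<le> d" and bH: "\<And>x. x \<in> U \<Longrightarrow> onorm (H x) \<le> d"
    and lower: "\<And>x \<xi>. x \<in> U \<Longrightarrow> norm \<xi> = 1 \<Longrightarrow> c * d \<le> \<bar>h x\<bar> + norm (G x) + \<bar>H x \<xi> \<bullet> \<xi>\<bar>"
    and c: "0 < c" and d: "0 < d" and \<eta>: "0 < \<eta>"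
  shows "measure lebesgue {x \<in> U. \<bar>h x\<bar> \<le> \<eta>} \<le> sublevel_const c DIM('a) * \<eta> / d"
proof -
  let ?m = "DIM('a)"
  define B where "B = 64 * 3 ^ ?m + real ?m * 2 ^ (?m + 8)"
  have B: "0 \<le> B" by (simp add: B_def)
  define A where "A = (16 * real ?m / c + 1) ^ ?m * (B * \<eta> / (c * d))"
  have A: "0 \<le> A" using B c d \<eta> by (simp add: A_def)
  have const: "sublevel_const c ?m * \<eta> / d = 8 * \<eta> / (c * d) + A"
    using c d by (simp add: sublevel_const_def A_def B_def field_simps)
  have sublevel: "compact {x \<in> Q. \<bar>h x\<bar> \<le> \<eta>}" if "compact Q" "Q \<subseteq> U" for Q
    using compact_abs_sublevel[OF that(1) continuous_on_subset[OF has_derivative_continuous_on[OF D1] that(2)]] .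
  show ?thesis
  proof (cases "c * d < 8 * \<eta>")
    case True
    have "measure lebesgue {x \<in> U. \<bar>h x\<bar> \<le> \<eta>} \<le> measure lebesgue (cbox 0 (0 + 1 *\<^sub>R One :: 'a))"
      using lmeasurable_compact[OF sublevel] by (intro measure_mono_fmeasurable) (auto simp: U_def)
    also have "\<dots> = 1" by (simp add: measure_cube)
    also have "\<dots> \<le> 8 * \<eta> / (c * d)" using True c d by simp
    finally show ?thesis using const A by linarith
  next
    case False
    define N where "N = nat \<lceil>16 * real ?m / c\<rceil>"
    have N: "0 < N" "16 * real ?m / c \<le> real N" "real N \<le> 16 * real ?m / c + 1"
      using c by (auto simp: N_def)
    define r where "r = 1 / real N"
    have r: "0 < r" "r \<le> 1" "real ?m * r \<le> c / 16"
      using N c by (auto simp: r_def field_simps)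
    obtain L :: "'a set" where L: "finite L" "card L \<le> N ^ ?m"
      and sub: "\<And>l. l \<in> L \<Longrightarrow> cbox l (l + r *\<^sub>R One) \<subseteq> U"
      and cover: "U \<subseteq> (\<Union>l\<in>L. cbox l (l + r *\<^sub>R One))"
      using unit_cube_grid[OF N(1), where 'a='a, folded r_def U_def] by blast
    let ?S = "\<lambda>l. {x \<in> cbox l (l + r *\<^sub>R One). \<bar>h x\<bar> \<le> \<eta>}"
    have each: "measure lebesgue (?S l) \<le> B * \<eta> / (c * d)" if "l \<in> L" for l
      unfolding B_def
    proof (rule measure_sublevel_small_cube[OF dim r])
      note l = sub[OF that]
      show "(h has_derivative (\<lambda>v. G z \<bullet> v)) (at z within cbox l (l + r *\<^sub>R One))"
        and "(G has_derivative H z) (at z within cbox l (l + r *\<^sub>R One))"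
        if "z \<in> cbox l (l + r *\<^sub>R One)" for z
        using has_derivative_subset[OF D1 l] has_derivative_subset[OF D2 l] l that by auto
      show "continuous_on (cbox l (l + r *\<^sub>R One)) (\<lambda>x. H x i)" if "i \<in> Basis" for i
        using continuous_on_subset[OF cont[OF that] l] .
    qed (use subsetD[OF sub[OF that]] c d \<eta> False in \<open>auto intro!: bG bH lower\<close>)
    have "{x \<in> U. \<bar>h x\<bar> \<le> \<eta>} = (\<Union>l\<in>L. ?S l)" using sub cover by blast
    also have "measure lebesgue (\<Union>l\<in>L. ?S l) \<le> (\<Sum>l\<in>L. measure lebesgue (?S l))"
      using sub by (intro measure_UNION_le[OF L(1)] fmeasurableD lmeasurable_compact sublevel) auto
    also have "\<dots> \<le> real (card L) * (B * \<eta> / (c * d))"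
      using sum_mono[OF each] by simp
    also have "\<dots> \<le> (16 * real ?m / c + 1) ^ ?m * (B * \<eta> / (c * d))"
    proof (rule mult_right_mono)
      have "real (card L) \<le> real N ^ ?m" using L(2) by (simp flip: of_nat_power)
      also have "\<dots> \<le> (16 * real ?m / c + 1) ^ ?m" using N by (intro power_mono) auto
      finally show "real (card L) \<le> (16 * real ?m / c + 1) ^ ?m" .
    qed (use B c d \<eta> in simp)
    finally have "measure lebesgue {x \<in> U. \<bar>h x\<bar> \<le> \<eta>} \<le> A" unfolding A_def .
    moreover have "0 \<le> 8 * \<eta> / (c * d)" using c d \<eta> by simp
    ultimately show ?thesis using const by linarith
  qed
qed

section \<open>Vertical neighbourhoods of C2 graphs\<close>

lemma grad_on_eqI:
  assumes "\<And>i. i \<in> Basis \<Longrightarrow> a \<bullet> i < b \<bullet> i" "x \<in> cbox a b"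
    and "(h has_derivative (\<lambda>u. v \<bullet> u)) (at x within cbox a b)"
  shows "grad_on (cbox a b) h x = v"
proof -
  have "(h has_derivative (\<lambda>u. grad_on (cbox a b) h x \<bullet> u)) (at x within cbox a b)"
    unfolding grad_on_def by (rule someI[of _ v]) (rule assms(3))
  then have "(\<lambda>u. grad_on (cbox a b) h x \<bullet> u) = (\<lambda>u. v \<bullet> u)"
    using frechet_derivative_unique_within_closed_interval[OF assms(1,2) _ assms(3)] by blast
  then show ?thesis by (metis vector_eq_rdot)
qed

lemma hess_on_eqI:
  assumes "\<And>i. i \<in> Basis \<Longrightarrow> a \<bullet> i < b \<bullet> i" "x \<in> cbox a b"
    and "(grad_on (cbox a b) h has_derivative L) (at x within cbox a b)"
  shows "hess_on (cbox a b) h x = L"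
proof -
  have "(grad_on (cbox a b) h has_derivative hess_on (cbox a b) h x) (at x within cbox a b)"
    unfolding hess_on_def by (rule someI[of _ L]) (rule assms(3))
  then show ?thesis
    using frechet_derivative_unique_within_closed_interval[OF assms(1,2) _ assms(3)] by blast
qed

lemma C2_on_diff:
  assumes box: "\<And>i. i \<in> Basis \<Longrightarrow> a \<bullet> i < b \<bullet> i"
    and f: "C2_on (cbox a b) f" and g: "C2_on (cbox a b) g"
  shows "C2_on (cbox a b) (\<lambda>x. f x - g x)"
proof -
  let ?U = "cbox a b" and ?h = "\<lambda>x. f x - g x"
  have Df: "\<And>x. x \<in> ?U \<Longrightarrow> (f has_derivative (\<lambda>u. grad_on ?U f x \<bullet> u)) (at x within ?U)"
    and DDf: "\<And>x. x \<in> ?U \<Longrightarrow> (grad_on ?U f has_derivative hess_on ?U f x) (at x within ?U)"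
    and Hf: "\<And>i. i \<in> Basis \<Longrightarrow> continuous_on ?U (\<lambda>x. hess_on ?U f x i)"
    and Dg: "\<And>x. x \<in> ?U \<Longrightarrow> (g has_derivative (\<lambda>u. grad_on ?U g x \<bullet> u)) (at x within ?U)"
    and DDg: "\<And>x. x \<in> ?U \<Longrightarrow> (grad_on ?U g has_derivative hess_on ?U g x) (at x within ?U)"
    and Hg: "\<And>i. i \<in> Basis \<Longrightarrow> continuous_on ?U (\<lambda>x. hess_on ?U g x i)"
    using f g by (auto simp: C2_on_def)
  have D1: "(?h has_derivative (\<lambda>u. (grad_on ?U f x - grad_on ?U g x) \<bullet> u)) (at x within ?U)"
    if "x \<in> ?U" for x
    using has_derivative_diff[OF Df[OF that] Dg[OF that]] by (simp add: inner_diff_left)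
  then have grad: "grad_on ?U ?h x = grad_on ?U f x - grad_on ?U g x" if "x \<in> ?U" for x
    using grad_on_eqI[OF box that] that by blast
  have D2: "(grad_on ?U ?h has_derivative (\<lambda>v. hess_on ?U f x v - hess_on ?U g x v)) (at x within ?U)"
    if "x \<in> ?U" for x
    using has_derivative_transform[OF that grad has_derivative_diff[OF DDf[OF that] DDg[OF that]]] .
  then have hess: "hess_on ?U ?h x = (\<lambda>v. hess_on ?U f x v - hess_on ?U g x v)" if "x \<in> ?U" for x
    using hess_on_eqI[OF box that] that by blast
  show ?thesis
    unfolding C2_on_def
  proof (intro conjI ballI)
    show "(?h has_derivative (\<lambda>u. grad_on ?U ?h x \<bullet> u)) (at x within ?U)" if "x \<in> ?U" for x
      using D1[OF that] grad[OF that] by simp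
    show "(grad_on ?U ?h has_derivative hess_on ?U ?h x) (at x within ?U)" if "x \<in> ?U" for x
      using D2[OF that] hess[OF that] by simp
    show "continuous_on ?U (\<lambda>x. hess_on ?U ?h x i)" if "i \<in> Basis" for i
      using continuous_on_diff[OF Hf[OF that] Hg[OF that]] hess by (simp add: continuous_on_eq)
  qed
qed

lemma C2_on_norm_bounds:
  assumes "compact U" "C2_on U h" "x \<in> U"
  shows "norm (grad_on U h x) \<le> C2_norm U h" "onorm (hess_on U h x) \<le> C2_norm U h"
proof -
  have D1: "\<And>x. x \<in> U \<Longrightarrow> (h has_derivative (\<lambda>u. grad_on U h x \<bullet> u)) (at x within U)"
    and D2: "\<And>x. x \<in> U \<Longrightarrow> (grad_on U h has_derivative hess_on U h x) (at x within U)"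
    and H: "\<And>i. i \<in> Basis \<Longrightarrow> continuous_on U (\<lambda>x. hess_on U h x i)"
    using assms(2) by (auto simp: C2_on_def)
  have bl: "bounded_linear (hess_on U h y)" if "y \<in> U" for y
    using D2[OF that] has_derivative_bounded_linear by blast
  have bdd1: "bdd_above ((\<lambda>x. \<bar>h x\<bar>) ` U)"
    using has_derivative_continuous_on[OF D1] assms(1)
    by (intro bounded_imp_bdd_above compact_imp_bounded compact_continuous_image continuous_intros)
  have bdd2: "bdd_above ((\<lambda>x. norm (grad_on U h x)) ` U)"
    using has_derivative_continuous_on[OF D2] assms(1)
    by (intro bounded_imp_bdd_above compact_imp_bounded compact_continuous_image continuous_intros)
  have "bdd_above ((\<lambda>x. \<Sum>i\<in>Basis. norm (hess_on U h x i)) ` U)"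
    using H assms(1)
    by (intro bounded_imp_bdd_above compact_imp_bounded compact_continuous_image continuous_intros)
  then obtain M where M: "\<And>y. y \<in> U \<Longrightarrow> (\<Sum>i\<in>Basis. norm (hess_on U h y i)) \<le> M"
    by (auto simp: bdd_above_def)
  have bdd3: "bdd_above ((\<lambda>x. onorm (hess_on U h x)) ` U)"
    using order_trans[OF onorm_componentwise[OF bl] M] by (auto simp: bdd_above_def)
  have s1: "0 \<le> (SUP x\<in>U. \<bar>h x\<bar>)"
    using cSUP_upper[OF assms(3) bdd1] by (meson abs_ge_zero order_trans)
  have s2: "0 \<le> (SUP x\<in>U. norm (grad_on U h x))"
    using cSUP_upper[OF assms(3) bdd2] by (meson norm_ge_zero order_trans)
  have s3: "0 \<le> (SUP x\<in>U. onorm (hess_on U h x))"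
    using cSUP_upper[OF assms(3) bdd3] onorm_pos_le[OF bl[OF assms(3)]] by linarith
  show "norm (grad_on U h x) \<le> C2_norm U h"
    using cSUP_upper[OF assms(3) bdd2] s1 s3 by (simp add: C2_norm_def)
  show "onorm (hess_on U h x) \<le> C2_norm U h"
    using cSUP_upper[OF assms(3) bdd3] s1 s2 by (simp add: C2_norm_def)
qed

lemma closed_vnbhd:
  fixes f :: "'a::euclidean_space \<Rightarrow> real"
  assumes "compact U" "continuous_on U f"
  shows "closed (vnbhd U f \<delta>)"
proof -
  have "continuous_on (U \<times> UNIV) (\<lambda>p. f (fst p) - snd p)"
    by (intro continuous_intros continuous_on_compose2[OF assms(2)]) auto
  then have "closed ((U \<times> UNIV) \<inter> (\<lambda>p. f (fst p) - snd p) -` {-\<delta>..\<delta>})"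
    using compact_imp_closed[OF assms(1)] by (intro continuous_closed_preimage closed_Times) auto
  moreover have "(U \<times> UNIV) \<inter> (\<lambda>p. f (fst p) - snd p) -` {-\<delta>..\<delta>} = vnbhd U f \<delta>"
    by (auto simp: vnbhd_def)
  ultimately show ?thesis by simp
qed

lemma measure_vnbhd_Int_le:
  fixes f g :: "'a::euclidean_space \<Rightarrow> real"
  assumes U: "compact U" and f: "continuous_on U f" and g: "continuous_on U g" and \<delta>: "0 < \<delta>"
  shows "measure lebesgue (vnbhd U f \<delta> \<inter> vnbhd U g \<delta>)
           \<le> 2 * \<delta> * measure lebesgue {x \<in> U. \<bar>f x - g x\<bar> \<le> 2 * \<delta>}"
proof -
  define V where "V = vnbhd U f \<delta> \<inter> vnbhd U g \<delta>"
  define T where "T = {x \<in> U. \<bar>f x - g x\<bar> \<le> 2 * \<delta>}"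
  have V: "V \<in> sets lborel"
    using closed_vnbhd[OF U f] closed_vnbhd[OF U g] by (simp add: V_def borel_closed)
  have "compact {x \<in> U. f x - g x \<in> {-2 * \<delta>..2 * \<delta>}}"
    using f g by (intro compact_restrict_preimage[OF U] continuous_intros) auto
  moreover have "{x \<in> U. f x - g x \<in> {-2 * \<delta>..2 * \<delta>}} = T" by (auto simp: T_def abs_le_iff)
  ultimately have "compact T" by simp
  have slice: "emeasure lborel (Pair x -` V) \<le> ennreal (2 * \<delta>) * indicator T x" for x
  proof (cases "x \<in> T")
    case True
    have "emeasure lborel (Pair x -` V) \<le> emeasure lborel {f x - \<delta> .. f x + \<delta>}"
      by (intro emeasure_mono) (auto simp: V_def vnbhd_def)
    then show ?thesis using True \<delta> by simp
  next
    case False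
    then have "Pair x -` V = {}" by (auto simp: V_def vnbhd_def T_def abs_le_iff)
    then show ?thesis by simp
  qed
  have "emeasure lborel V = emeasure (lborel \<Otimes>\<^sub>M lborel) V" by (simp add: lborel_prod)
  also have "\<dots> = (\<integral>\<^sup>+x. emeasure lborel (Pair x -` V) \<partial>lborel)"
    using V by (intro lborel.emeasure_pair_measure_alt) (simp only: lborel_prod)
  also have "\<dots> \<le> (\<integral>\<^sup>+x. ennreal (2 * \<delta>) * indicator T x \<partial>lborel)"
    using slice by (rule nn_integral_mono)
  also have "\<dots> = ennreal (2 * \<delta>) * emeasure lborel T"
    using borel_compact[OF \<open>compact T\<close>] by (intro nn_integral_cmult_indicator) simp
  also have "\<dots> = ennreal (2 * \<delta> * measure lborel T)"
    using fmeasurable_compact[OF \<open>compact T\<close>] \<delta> by (simp add: emeasure_eq_measure2 ennreal_mult)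
  finally have "measure lborel V \<le> 2 * \<delta> * measure lborel T"
    unfolding measure_def using \<delta> by (intro enn2real_leI) auto
  then show ?thesis
    using V borel_compact[OF \<open>compact T\<close>] by (simp add: V_def T_def measure_completion)
qed

lemma measure_vnbhd_Int_le_C2_dist:
  fixes f g :: "'a::euclidean_space \<Rightarrow> real"
  assumes dim: "2 \<le> DIM('a)" and f: "C2_on unit_cube f" and g: "C2_on unit_cube g"
    and lower: "\<And>x \<xi>. x \<in> unit_cube \<Longrightarrow> norm \<xi> = 1 \<Longrightarrow> c * C2_dist unit_cube f g
                  \<le> \<bar>f x - g x\<bar> + norm (grad_on unit_cube (\<lambda>z. f z - g z) x)
                    + \<bar>dd2 unit_cube (\<lambda>z. f z - g z) \<xi> x\<bar>"
    and c: "0 < c" and \<delta>: "0 < \<delta>" "\<delta> \<le> C2_dist unit_cube f g"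
  shows "measure lebesgue (vnbhd unit_cube f \<delta> \<inter> vnbhd unit_cube g \<delta>)
           \<le> 4 * sublevel_const c DIM('a) * \<delta>\<^sup>2 / C2_dist unit_cube f g"
proof -
  let ?U = "cbox 0 (One :: 'a)" and ?h = "\<lambda>z. f z - g z"
  have box: "0 \<bullet> i < One \<bullet> i" if "i \<in> (Basis :: 'a set)" for i using that by simp
  have h: "C2_on ?U ?h" using C2_on_diff[OF box] f g by (simp add: unit_cube_def)
  have D1: "(?h has_derivative (\<lambda>v. grad_on ?U ?h z \<bullet> v)) (at z within ?U)"
    and D2: "(grad_on ?U ?h has_derivative hess_on ?U ?h z) (at z within ?U)" if "z \<in> ?U" for z
    using h that by (auto simp: C2_on_def)
  have cont: "continuous_on ?U (\<lambda>x. hess_on ?U ?h x i)" if "i \<in> Basis" for i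
    using h that by (auto simp: C2_on_def)
  have "measure lebesgue {x \<in> ?U. \<bar>?h x\<bar> \<le> 2 * \<delta>}
          \<le> sublevel_const c DIM('a) * (2 * \<delta>) / C2_dist unit_cube f g"
    using C2_on_norm_bounds[OF compact_cbox h] lower c \<delta>
    by (intro measure_sublevel_unit_cube[OF dim D1 D2 cont])
       (auto simp: C2_dist_def unit_cube_def dd2_def)
  moreover have "continuous_on ?U f" "continuous_on ?U g"
    using f g by (auto simp: C2_on_def unit_cube_def intro!: has_derivative_continuous_on)
  then have "measure lebesgue (vnbhd unit_cube f \<delta> \<inter> vnbhd unit_cube g \<delta>)
      \<le> 2 * \<delta> * measure lebesgue {x \<in> ?U. \<bar>?h x\<bar> \<le> 2 * \<delta>}"
    unfolding unit_cube_def by (rule measure_vnbhd_Int_le[OF compact_cbox _ _ \<delta>(1)])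
  ultimately have "measure lebesgue (vnbhd unit_cube f \<delta> \<inter> vnbhd unit_cube g \<delta>)
      \<le> 2 * \<delta> * (sublevel_const c DIM('a) * (2 * \<delta>) / C2_dist unit_cube f g)"
    using \<delta> by (smt (verit) mult_left_mono)
  then show ?thesis by (simp add: power2_eq_square mult_ac)
qed

lemma cinematic_lower_bound:
  assumes "cinematic U F K D \<alpha>" "f \<in> F" "g \<in> F" "x \<in> U" "norm \<xi> = 1"
  shows "inverse K * C2_dist U f g
           \<le> \<bar>f x - g x\<bar> + norm (grad_on U (\<lambda>z. f z - g z) x) + \<bar>dd2 U (\<lambda>z. f z - g z) \<xi> x\<bar>"
proof -
  have "inverse K * C2_dist U f g \<le> (INF x\<in>U. \<bar>f x - g x\<bar>
      + norm (grad_on U (\<lambda>z. f z - g z) x) + \<bar>dd2 U (\<lambda>z. f z - g z) \<xi> x\<bar>)"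
    using assms(1-3,5) by (auto simp: cinematic_def)
  also have "\<dots> \<le> \<bar>f x - g x\<bar> + norm (grad_on U (\<lambda>z. f z - g z) x) + \<bar>dd2 U (\<lambda>z. f z - g z) \<xi> x\<bar>"
    by (rule cINF_lower[OF bdd_belowI2[where m=0] assms(4)]) auto
  finally show ?thesis .
qed

theorem lemma1p16:
  fixes K D :: real and \<alpha> :: "real \<Rightarrow> real"
  assumes "DIM('a::euclidean_space) + 1 \<ge> 3"
  shows "\<exists>C>0. \<forall>(F :: ('a \<Rightarrow> real) set) f g \<delta>.
           \<delta> > 0 \<longrightarrow> cinematic unit_cube F K D \<alpha> \<longrightarrow> f \<in> F \<longrightarrow> g \<in> F \<longrightarrow>
           \<delta> \<le> C2_dist unit_cube f g \<longrightarrow> C2_dist unit_cube f g \<le> 1 \<longrightarrow>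
           measure lebesgue (vnbhd unit_cube f \<delta> \<inter> vnbhd unit_cube g \<delta>)
             \<le> C * \<delta>\<^sup>2 / C2_dist unit_cube f g"
proof (cases "0 < K")
  case False
  then show ?thesis by (intro exI[of _ 1]) (auto simp: cinematic_def)
next
  case True
  have dim: "2 \<le> DIM('a)" using assms by simp
  show ?thesis
  proof (intro exI[of _ "4 * sublevel_const (inverse K) DIM('a)"] conjI allI impI)
    show "0 < 4 * sublevel_const (inverse K) DIM('a)" using True sublevel_const_pos by simp
    fix F :: "('a \<Rightarrow> real) set" and f g \<delta>
    assume \<delta>: "0 < \<delta>" and F: "cinematic unit_cube F K D \<alpha>" and fg: "f \<in> F" "g \<in> F"
      and d: "\<delta> \<le> C2_dist unit_cube f g"
    note lower = cinematic_lower_bound[OF F fg]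
    have "C2_on unit_cube f" "C2_on unit_cube g" using F fg by (auto simp: cinematic_def)
    from measure_vnbhd_Int_le_C2_dist[OF dim this lower _ \<delta> d] True
    show "measure lebesgue (vnbhd unit_cube f \<delta> \<inter> vnbhd unit_cube g \<delta>)
            \<le> 4 * sublevel_const (inverse K) DIM('a) * \<delta>\<^sup>2 / C2_dist unit_cube f g"
      by simp
  qed
qed

end
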